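(* For integers $k$ and $t$ with $k \geq 2$ and $0 \leq t \leq k$, $$gr_k(K_3 : tP_5, (k-t)P_3) \leq t+4,$$ i.e., for every $n \geq t+4$, every coloring of the edges of $K_n$ with colors from $\{1,\dots,k\}$ contains either a rainbow triangle, or a monochromatic path $P_5$ in some color $j \in \{1,\dots,t\}$, or a monochromatic path $P_3$ in some color $j \in \{t+1,\dots,k\}$.
   Context: $P_m$ denotes the path on $m$ vertices. A rainbow triangle is a triangle whose three edges have three distinct colors. For graphs $G, H_1,\dots,H_k$, $gr_k(G : H_1,\dots,H_k)$ is the minimum integer $N$ such that for every $n \geq N$, every coloring of the edges of $K_n$ using colors $1,\dots,k$ contains either a rainbow copy of $G$ or, for some $i$, a copy of $H_i$ all of whose edges have color $i$. The notation $gr_k(G : tH, (k-t)K)$ means $gr_k(G : H,\dots,H,K,\dots,K)$ with $H$ appearing $t$ times (colors $1,\dots,t$) and $K$ appearing $k-t$ times (colors $t+1,\dots,k$). *)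

theory Defs
  imports Main
begin

definition edge_coloring :: "nat \<Rightarrow> nat \<Rightarrow> (nat set \<Rightarrow> nat) \<Rightarrow> bool" where
  "edge_coloring n k c \<longleftrightarrow>
     (\<forall>u<n. \<forall>v<n. u \<noteq> v \<longrightarrow> c {u, v} \<in> {1..k})"

definition has_rainbow_triangle :: "nat \<Rightarrow> (nat set \<Rightarrow> nat) \<Rightarrow> bool" where
  "has_rainbow_triangle n c \<longleftrightarrow>
     (\<exists>a b d. a < n \<and> b < n \<and> d < n \<and> a \<noteq> b \<and> b \<noteq> d \<and> a \<noteq> d \<and>
        c {a, b} \<noteq> c {b, d} \<and> c {a, b} \<noteq> c {a, d} \<and> c {b, d} \<noteq> c {a, d})"

definition has_mono_path :: "nat \<Rightarrow> (nat set \<Rightarrow> nat) \<Rightarrow> nat \<Rightarrow> nat \<Rightarrow> bool" where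
  "has_mono_path n c m j \<longleftrightarrow>
     (\<exists>vs. length vs = m \<and> distinct vs \<and> set vs \<subseteq> {..<n} \<and>
        (\<forall>i. Suc i < m \<longrightarrow> c {vs ! i, vs ! Suc i} = j))"

end

theory Submission
  imports Defs
begin

(* A colouring without rainbow triangles is a Gallai colouring. Under the hypotheses the colouring of
   K_n is Gallai, it has no monochromatic P5 at all (a P5 contains a P3, whose colour must be at
   most t), and every colour carrying a monochromatic P3 lies in {1..t}. It therefore suffices to
   show |V| <= |B(V)| + 3, where B(V) is the set of colours having a monochromatic P3 inside V. For |V| >= 5 choose j in B(V) and a vertex b of maximal j-degree.
   If the j-component C of b is not all of V, then by the Gallai property every x outside C sees C
   in a single colour f(x) <> j; by P5-freeness f is injective on V - C and takes values in
   B(V) - B(C), so induction on C applies. If the j-graph is connected and spanning, then b lies on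
   every j-coloured P3 (the alternatives produce a j-coloured 4-cycle, a double star or a P2 and a
   P3 with no j-edges between them, each of which forces a monochromatic P5), so removing b loses
   the colour j and induction on V - {b} applies. *)

lemma card_ge_2_obtains:
  assumes "2 \<le> card A"
  obtains x y where "x \<in> A" "y \<in> A" "x \<noteq> y"
  using assms by (metis card_2_iff' obtain_subset_with_card_n subsetD)

lemma obtain_max_on_finite:
  fixes f :: "'a \<Rightarrow> 'b::linorder"
  assumes "finite A" "A \<noteq> {}"
  obtains x where "x \<in> A" "\<forall>y\<in>A. f y \<le> f x"
proof -
  have "Max (f ` A) \<in> f ` A"
    using assms by simp
  then obtain x where "Max (f ` A) = f x" "x \<in> A"
    by (rule imageE)
  with assms that show ?thesis
    by (metis Max_ge finite_imageI imageI)
qed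

definition gallai_coloring :: "'a set \<Rightarrow> ('a set \<Rightarrow> 'b) \<Rightarrow> bool" where
  "gallai_coloring V c \<longleftrightarrow> (\<forall>x\<in>V. \<forall>y\<in>V. \<forall>z\<in>V. x \<noteq> y \<longrightarrow> y \<noteq> z \<longrightarrow> x \<noteq> z \<longrightarrow>
     c {x, y} = c {y, z} \<or> c {x, y} = c {x, z} \<or> c {y, z} = c {x, z})"

definition mono_path :: "'a set \<Rightarrow> ('a set \<Rightarrow> 'b) \<Rightarrow> 'b \<Rightarrow> 'a list \<Rightarrow> bool" where
  "mono_path V c j vs \<longleftrightarrow>
     distinct vs \<and> set vs \<subseteq> V \<and> (\<forall>i. Suc i < length vs \<longrightarrow> c {vs ! i, vs ! Suc i} = j)"

definition mono_P5_free :: "'a set \<Rightarrow> ('a set \<Rightarrow> 'b) \<Rightarrow> bool" where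
  "mono_P5_free V c \<longleftrightarrow> \<not> (\<exists>j a b d e f. mono_path V c j [a, b, d, e, f])"

definition P3_colours :: "'a set \<Rightarrow> ('a set \<Rightarrow> 'b) \<Rightarrow> 'b set" where
  "P3_colours V c = {j. \<exists>a b d. mono_path V c j [a, b, d]}"

definition mono_adj :: "'a set \<Rightarrow> ('a set \<Rightarrow> 'b) \<Rightarrow> 'b \<Rightarrow> 'a \<Rightarrow> 'a \<Rightarrow> bool" where
  "mono_adj V c j y z \<longleftrightarrow> y \<in> V \<and> z \<in> V \<and> y \<noteq> z \<and> c {y, z} = j"

definition mono_nbhd :: "'a set \<Rightarrow> ('a set \<Rightarrow> 'b) \<Rightarrow> 'b \<Rightarrow> 'a \<Rightarrow> 'a set" where
  "mono_nbhd V c j y = {z. mono_adj V c j y z}"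

definition mono_component :: "'a set \<Rightarrow> ('a set \<Rightarrow> 'b) \<Rightarrow> 'b \<Rightarrow> 'a \<Rightarrow> 'a set" where
  "mono_component V c j b = {z. (mono_adj V c j)\<^sup>*\<^sup>* b z}"

lemma mono_path_singleton [simp]: "mono_path V c j [a] \<longleftrightarrow> a \<in> V"
  by (simp add: mono_path_def)

lemma mono_path_Cons_Cons [simp]:
  "mono_path V c j (a # b # vs) \<longleftrightarrow>
     a \<in> V \<and> a \<notin> set (b # vs) \<and> c {a, b} = j \<and> mono_path V c j (b # vs)"
  unfolding mono_path_def by (simp add: All_less_Suc2) blast

lemma mono_path_mono: "mono_path V c j vs \<Longrightarrow> V \<subseteq> W \<Longrightarrow> mono_path W c j vs"
  by (auto simp: mono_path_def)

lemma mono_path_take: "mono_path V c j vs \<Longrightarrow> mono_path V c j (take m vs)"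
  by (auto simp: mono_path_def dest: in_set_takeD)

lemma gallai_coloring_subset: "gallai_coloring V c \<Longrightarrow> W \<subseteq> V \<Longrightarrow> gallai_coloring W c"
  unfolding gallai_coloring_def by blast

lemma gallai_coloring_apex_eq:
  assumes "gallai_coloring V c" "x \<in> V" "y \<in> V" "z \<in> V" "distinct [x, y, z]"
    and "c {y, z} = j" "c {x, y} \<noteq> j" "c {x, z} \<noteq> j"
  shows "c {x, y} = c {x, z}"
  using assms unfolding gallai_coloring_def by fastforce

lemma mono_P5_freeD: "mono_P5_free V c \<Longrightarrow> mono_path V c j [a, b, d, e, f] \<Longrightarrow> False"
  unfolding mono_P5_free_def by (erule notE) (intro exI)

lemma mono_P5_free_subset: "mono_P5_free V c \<Longrightarrow> W \<subseteq> V \<Longrightarrow> mono_P5_free W c"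
  unfolding mono_P5_free_def by (meson mono_path_mono)

lemma P3_colours_iff: "j \<in> P3_colours V c \<longleftrightarrow> (\<exists>a b d. mono_path V c j [a, b, d])"
  unfolding P3_colours_def by (rule mem_Collect_eq)

lemma P3_coloursI: "mono_path V c j [a, b, d] \<Longrightarrow> j \<in> P3_colours V c"
  unfolding P3_colours_def by (intro CollectI exI)

lemma P3_colours_mono: "W \<subseteq> V \<Longrightarrow> P3_colours W c \<subseteq> P3_colours V c"
  unfolding P3_colours_def by (auto dest: mono_path_mono)

lemma finite_P3_colours: "finite V \<Longrightarrow> finite (P3_colours V c)"
proof -
  assume "finite V"
  moreover have "P3_colours V c \<subseteq> (\<lambda>(a, b). c {a, b}) ` (V \<times> V)"
    unfolding P3_colours_def by force
  ultimately show ?thesis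
    by (meson finite_SigmaI finite_imageI finite_subset)
qed

lemma gallai_coloring_P3_colours_nonempty:
  assumes "gallai_coloring V c" "3 \<le> card V"
  shows "P3_colours V c \<noteq> {}"
proof -
  obtain T where "T \<subseteq> V" "card T = 3"
    using obtain_subset_with_card_n[OF assms(2)] by blast
  then obtain x y z where xyz: "{x, y, z} \<subseteq> V" "distinct [x, y, z]"
    by (auto simp: card_3_iff)
  then have "c {x, y} = c {y, z} \<or> c {x, y} = c {x, z} \<or> c {y, z} = c {x, z}"
    using assms(1) unfolding gallai_coloring_def by auto
  then have "mono_path V c (c {x, y}) [x, y, z] \<or> mono_path V c (c {x, y}) [y, x, z]
      \<or> mono_path V c (c {y, z}) [x, z, y]"
    using xyz by (simp add: insert_commute) metis
  then obtain j a b d where "mono_path V c j [a, b, d]"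
    by blast
  from P3_coloursI[OF this] show ?thesis
    by blast
qed

lemma mono_nbhd_iff [simp]: "z \<in> mono_nbhd V c j y \<longleftrightarrow> mono_adj V c j y z"
  by (simp add: mono_nbhd_def)

lemma finite_mono_nbhd: "finite V \<Longrightarrow> finite (mono_nbhd V c j y)"
  by (rule finite_subset[of _ V]) (auto simp: mono_adj_def)

lemma card_mono_nbhd_P3_centre:
  assumes "finite V" "mono_path V c j [p, q, r]"
  shows "2 \<le> card (mono_nbhd V c j q)"
proof -
  have "{p, r} \<subseteq> mono_nbhd V c j q"
    using assms(2) by (auto simp: mono_adj_def insert_commute)
  then have "card {p, r} \<le> card (mono_nbhd V c j q)"
    by (rule card_mono[OF finite_mono_nbhd[OF assms(1)]])
  with assms(2) show ?thesis
    by simp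
qed

lemma obtain_max_degree_vertex:
  assumes fin: "finite V" and path: "mono_path V c j [p, q, r]"
  obtains b where "b \<in> V" "\<forall>y\<in>V. card (mono_nbhd V c j y) \<le> card (mono_nbhd V c j b)"
    "2 \<le> card (mono_nbhd V c j b)"
proof -
  have "V \<noteq> {}"
    using path by auto
  then obtain b where b: "b \<in> V" "\<forall>y\<in>V. card (mono_nbhd V c j y) \<le> card (mono_nbhd V c j b)"
    by (rule obtain_max_on_finite[OF fin])
  moreover have "2 \<le> card (mono_nbhd V c j b)"
    using card_mono_nbhd_P3_centre[OF fin path] b path by fastforce
  ultimately show ?thesis
    using that by blast
qed

lemma mono_component_subset: "b \<in> V \<Longrightarrow> mono_component V c j b \<subseteq> V"
proof
  fix z assume "b \<in> V" "z \<in> mono_component V c j b"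
  then have "(mono_adj V c j)\<^sup>*\<^sup>* b z"
    by (simp add: mono_component_def)
  then show "z \<in> V"
    by (induction rule: rtranclp_induct) (use \<open>b \<in> V\<close> in \<open>auto simp: mono_adj_def\<close>)
qed

lemma mono_component_self: "b \<in> mono_component V c j b"
  by (simp add: mono_component_def)

lemma mono_component_step:
  "z \<in> mono_component V c j b \<Longrightarrow> mono_adj V c j z w \<Longrightarrow> w \<in> mono_component V c j b"
  unfolding mono_component_def by (auto intro: rtranclp.rtrancl_into_rtrancl)

lemma mono_component_outside_colour:
  assumes gallai: "gallai_coloring V c" and "b \<in> V"
    and x: "x \<in> V" "x \<notin> mono_component V c j b" and z: "z \<in> mono_component V c j b"
  shows "c {x, z} = c {x, b} \<and> c {x, z} \<noteq> j"
proof -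
  have not_j: "c {x, w} \<noteq> j" if w: "w \<in> mono_component V c j b" for w
  proof
    assume "c {x, w} = j"
    with w x \<open>b \<in> V\<close> have "mono_adj V c j w x"
      using mono_component_subset by (fastforce simp: mono_adj_def insert_commute)
    with x show False
      using mono_component_step[OF w] by blast
  qed
  from z have "(mono_adj V c j)\<^sup>*\<^sup>* b z"
    by (simp add: mono_component_def)
  then have "c {x, z} = c {x, b}"
  proof (induction rule: rtranclp_induct)
    case (step y w)
    then have "y \<in> mono_component V c j b" "w \<in> mono_component V c j b"
      using mono_component_step by (auto simp: mono_component_def)
    then have "c {x, y} = c {x, w}"
      using gallai_coloring_apex_eq[OF gallai x(1), of y w j] step(2) x not_j
      by (auto simp: mono_adj_def)
    then show ?case
      using step.IH by simp
  qed simp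
  with not_j[OF z] show ?thesis
    by simp
qed

lemma spanning_mono_component_edge_leaving:
  assumes "mono_component V c j b = V" "b \<in> S" "S \<subseteq> V" "S \<noteq> V"
  shows "\<exists>s\<in>S. \<exists>w\<in>V - S. mono_adj V c j s w"
proof (rule ccontr)
  assume closed: "\<not> ?thesis"
  have "z \<in> S" if "(mono_adj V c j)\<^sup>*\<^sup>* b z" for z
    using that by (induction rule: rtranclp_induct) (use assms closed in \<open>auto simp: mono_adj_def\<close>)
  with assms show False
    by (auto simp: mono_component_def)
qed

section \<open>Configurations forcing a monochromatic P5\<close>

lemma mono_P5_free_no_spanning_C4:
  assumes P5: "mono_P5_free V c" and "finite V" "5 \<le> card V"
    and span: "mono_component V c j b = V"
    and cycle: "mono_path V c j [b, p, q, r]" "c {r, b} = j"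
  shows False
proof -
  let ?S = "{b, p, q, r}"
  have "?S \<subseteq> V"
    using cycle by simp
  moreover have "card ?S < card V"
    using card_length[of "[b, p, q, r]"] \<open>5 \<le> card V\<close> by simp
  ultimately obtain s w where "s \<in> ?S" "w \<in> V - ?S" "mono_adj V c j s w"
    using spanning_mono_component_edge_leaving[OF span, of ?S] by blast
  then show False
    using mono_P5_freeD[OF P5, of j w b p q r] mono_P5_freeD[OF P5, of j w p q r b]
      mono_P5_freeD[OF P5, of j w q r b p] mono_P5_freeD[OF P5, of j w r b p q] cycle
    by (auto simp: mono_adj_def insert_commute)
qed

lemma gallai_no_mono_double_star:
  assumes gallai: "gallai_coloring V c" and P5: "mono_P5_free V c"
    and "mono_path V c j [x1, u, v, y1]" "x2 \<in> V" "y2 \<in> V"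
    and "distinct [x1, x2, u, v, y1, y2]" "c {u, x2} = j" "c {v, y2} = j"
  shows False
proof -
  note facts = assms(3-)
  have x1y1: "c {x1, y1} \<noteq> j"
    using facts mono_P5_freeD[OF P5, of j x2 u x1 y1 v] by (auto simp: insert_commute)
  have x1y2: "c {x1, y2} \<noteq> j"
    using facts mono_P5_freeD[OF P5, of j x2 u x1 y2 v] by (auto simp: insert_commute)
  have uy1: "c {u, y1} \<noteq> j"
    using facts mono_P5_freeD[OF P5, of j x1 u y1 v y2] by (auto simp: insert_commute)
  have uy2: "c {u, y2} \<noteq> j"
    using facts mono_P5_freeD[OF P5, of j x1 u y2 v y1] by (auto simp: insert_commute)
  have x1v: "c {x1, v} \<noteq> j"
    using facts mono_P5_freeD[OF P5, of j y1 v x1 u x2] by (auto simp: insert_commute)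
  have "c {x1, y1} = c {x1, v}"
    using facts x1y1 x1v gallai_coloring_apex_eq[OF gallai, of x1 v y1 j] by (auto simp: insert_commute)
  moreover have "c {x1, y2} = c {x1, v}"
    using facts x1y2 x1v gallai_coloring_apex_eq[OF gallai, of x1 v y2 j] by (auto simp: insert_commute)
  moreover have "c {u, y1} = c {x1, y1}"
    using facts x1y1 uy1 gallai_coloring_apex_eq[OF gallai, of y1 u x1 j] by (auto simp: insert_commute)
  moreover have "c {u, y2} = c {x1, y2}"
    using facts x1y2 uy2 gallai_coloring_apex_eq[OF gallai, of y2 u x1 j] by (auto simp: insert_commute)
  ultimately have "mono_path V c (c {x1, v}) [y1, u, y2, x1, v]"
    using facts by (simp add: insert_commute) blast
  then show False
    by (rule mono_P5_freeD[OF P5])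
qed

lemma gallai_no_separated_mono_P2_P3:
  assumes gallai: "gallai_coloring V c" and P5: "mono_P5_free V c"
    and "mono_path V c j [x, y]" "mono_path V c j [p, q, r]" "x \<notin> {p, q, r}" "y \<notin> {p, q, r}"
    and "\<forall>w\<in>{p, q, r}. c {x, w} \<noteq> j \<and> c {y, w} \<noteq> j"
  shows False
proof -
  note facts = assms(3-)
  have "c {x, p} = c {x, q}"
    using facts gallai_coloring_apex_eq[OF gallai, of x p q j] by (auto simp: insert_commute)
  moreover have "c {x, r} = c {x, q}"
    using facts gallai_coloring_apex_eq[OF gallai, of x r q j] by (auto simp: insert_commute)
  moreover have "c {y, q} = c {x, q}"
    using facts gallai_coloring_apex_eq[OF gallai, of q y x j] by (auto simp: insert_commute)
  moreover have "c {y, r} = c {x, r}"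
    using facts gallai_coloring_apex_eq[OF gallai, of r y x j] by (auto simp: insert_commute)
  ultimately have "mono_path V c (c {x, q}) [p, x, q, y, r]"
    using facts by (simp add: insert_commute) blast
  then show False
    by (rule mono_P5_freeD[OF P5])
qed

section \<open>A vertex of maximal degree in a spanning colour class\<close>

lemma max_degree_vertex_not_adj_P3_end:
  assumes P5: "mono_P5_free V c" and fin: "finite V" and "5 \<le> card V"
    and span: "mono_component V c j b = V"
    and max: "\<forall>y\<in>V. card (mono_nbhd V c j y) \<le> card (mono_nbhd V c j b)"
    and path: "mono_path V c j [p, q, r]" and b: "b \<notin> {p, q, r}"
  shows "c {b, p} \<noteq> j"
proof
  assume bp: "c {b, p} = j"
  have "b \<in> V"
    using span mono_component_self by metis
  have nbhd_b: "mono_nbhd V c j b \<subseteq> {p, q, r}"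
  proof
    fix x assume "x \<in> mono_nbhd V c j b"
    then show "x \<in> {p, q, r}"
      using mono_P5_freeD[OF P5, of j x b p q r] path b bp by (auto simp: mono_adj_def insert_commute)
  qed
  have deg: "card (mono_nbhd V c j q) \<le> card (mono_nbhd V c j b)"
    using max path by simp
  (* Maximality of the degree of b forces b ~ r, closing the j-coloured 4-cycle b p q r. *)
  have "c {b, r} = j"
  proof (rule ccontr)
    assume "c {b, r} \<noteq> j"
    show False
    proof (cases "c {b, q} = j")
      case True
      with \<open>c {b, r} \<noteq> j\<close> have "mono_nbhd V c j b \<subseteq> {p, q}"
        using nbhd_b by (auto simp: mono_adj_def)
      then have "card (mono_nbhd V c j b) \<le> card {p, q}"
        by (rule card_mono[rotated]) simp
      also have "\<dots> \<le> 2"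
        by (simp add: card_insert_if)
      finally have "card (mono_nbhd V c j b) \<le> 2" .
      moreover have "{p, r, b} \<subseteq> mono_nbhd V c j q"
        using True path b \<open>b \<in> V\<close> by (auto simp: mono_adj_def insert_commute)
      then have "card {p, r, b} \<le> card (mono_nbhd V c j q)"
        by (rule card_mono[OF finite_mono_nbhd[OF fin]])
      then have "3 \<le> card (mono_nbhd V c j q)"
        using path b by auto
      ultimately show False
        using deg by simp
    next
      case False
      with \<open>c {b, r} \<noteq> j\<close> have "mono_nbhd V c j b \<subseteq> {p}"
        using nbhd_b by (auto simp: mono_adj_def)
      then have "card (mono_nbhd V c j b) \<le> 1"
        using card_mono[of "{p}"] by simp
      then show False
        using deg card_mono_nbhd_P3_centre[OF fin path] by simp
    qed
  qed
  then show False
    using mono_P5_free_no_spanning_C4[OF P5 fin \<open>5 \<le> card V\<close> span, of p q r] path b bp \<open>b \<in> V\<close>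
    by (auto simp: insert_commute)
qed

lemma max_degree_vertex_not_adj_P3_centre:
  assumes gallai: "gallai_coloring V c" and P5: "mono_P5_free V c" and fin: "finite V"
    and max: "\<forall>y\<in>V. card (mono_nbhd V c j y) \<le> card (mono_nbhd V c j b)"
    and path: "mono_path V c j [p, q, r]" and b: "b \<in> V" "b \<notin> {p, q, r}"
    and ends: "c {b, p} \<noteq> j" "c {b, r} \<noteq> j"
  shows "c {b, q} \<noteq> j"
proof
  assume bq: "c {b, q} = j"
  then have "{p, r, b} \<subseteq> mono_nbhd V c j q"
    using path b by (auto simp: mono_adj_def insert_commute)
  then have "card {p, r, b} \<le> card (mono_nbhd V c j q)"
    by (rule card_mono[OF finite_mono_nbhd[OF fin]])
  moreover have "card (mono_nbhd V c j q) \<le> card (mono_nbhd V c j b)"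
    using max path by simp
  ultimately have "3 \<le> card (mono_nbhd V c j b)"
    using path b by auto
  moreover have "q \<in> mono_nbhd V c j b"
    using bq path b by (auto simp: mono_adj_def)
  ultimately have "2 \<le> card (mono_nbhd V c j b - {q})"
    using finite_mono_nbhd[OF fin] by (simp add: card_Diff_singleton)
  then obtain x1 x2 where "x1 \<in> mono_nbhd V c j b - {q}" "x2 \<in> mono_nbhd V c j b - {q}" "x1 \<noteq> x2"
    by (rule card_ge_2_obtains)
  then show False
    using gallai_no_mono_double_star[OF gallai P5, of j x1 b q p x2 r] bq path b ends
    by (auto simp: mono_adj_def insert_commute)
qed

lemma max_degree_vertex_on_mono_P3:
  assumes gallai: "gallai_coloring V c" and P5: "mono_P5_free V c" and fin: "finite V"
    and "5 \<le> card V" and span: "mono_component V c j b = V"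
    and max: "\<forall>y\<in>V. card (mono_nbhd V c j y) \<le> card (mono_nbhd V c j b)"
    and path: "mono_path V c j [p, q, r]"
  shows "b \<in> {p, q, r}"
proof (rule ccontr)
  assume b: "b \<notin> {p, q, r}"
  have "b \<in> V"
    using span mono_component_self by metis
  have bp: "c {b, p} \<noteq> j"
    using max_degree_vertex_not_adj_P3_end[OF P5 fin \<open>5 \<le> card V\<close> span max path b] .
  have br: "c {b, r} \<noteq> j"
    using max_degree_vertex_not_adj_P3_end[OF P5 fin \<open>5 \<le> card V\<close> span max, of r q p]
      path b by (auto simp: insert_commute)
  have bq: "c {b, q} \<noteq> j"
    using max_degree_vertex_not_adj_P3_centre[OF gallai P5 fin max path \<open>b \<in> V\<close> b bp br] .
  have "2 \<le> card (mono_nbhd V c j b)"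
    using card_mono_nbhd_P3_centre[OF fin path] max path by fastforce
  then obtain x y where xy: "x \<in> mono_nbhd V c j b" "y \<in> mono_nbhd V c j b" "x \<noteq> y"
    by (rule card_ge_2_obtains)
  then have "x \<notin> {p, q, r}" "y \<notin> {p, q, r}"
    using bp bq br by (auto simp: mono_adj_def)
  show False
  proof (cases "\<exists>w\<in>{p, q, r}. c {x, w} = j")
    case True
    then show False
      using mono_P5_freeD[OF P5, of j y b x p q] mono_P5_freeD[OF P5, of j y b x q p]
        mono_P5_freeD[OF P5, of j y b x r q] xy \<open>x \<notin> {p, q, r}\<close> \<open>y \<notin> {p, q, r}\<close> path b
      by (auto simp: mono_adj_def insert_commute)
  next
    case False
    then show False
      using gallai_no_separated_mono_P2_P3[OF gallai P5, of j b x p q r] xy b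
        \<open>x \<notin> {p, q, r}\<close> path bp br bq
      by (auto simp: mono_adj_def insert_commute)
  qed
qed

section \<open>Counting the colours that carry a monochromatic P3\<close>

lemma card_P3_colours_remove_max_degree_vertex:
  assumes gallai: "gallai_coloring V c" and P5: "mono_P5_free V c" and fin: "finite V"
    and "5 \<le> card V" and span: "mono_component V c j b = V"
    and max: "\<forall>y\<in>V. card (mono_nbhd V c j y) \<le> card (mono_nbhd V c j b)"
    and j: "j \<in> P3_colours V c"
  shows "card (P3_colours (V - {b}) c) < card (P3_colours V c)"
proof -
  have "j \<notin> P3_colours (V - {b}) c"
  proof
    assume "j \<in> P3_colours (V - {b}) c"
    then obtain p q r where "mono_path (V - {b}) c j [p, q, r]"
      unfolding P3_colours_iff by blast
    then have "mono_path V c j [p, q, r]" "b \<notin> {p, q, r}"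
      by auto
    then show False
      using max_degree_vertex_on_mono_P3[OF gallai P5 fin \<open>5 \<le> card V\<close> span max] by blast
  qed
  then have "P3_colours (V - {b}) c \<subset> P3_colours V c"
    using P3_colours_mono[of "V - {b}" V c] j by blast
  then show ?thesis
    by (rule psubset_card_mono[OF finite_P3_colours[OF fin]])
qed

lemma card_P3_colours_component_add_outside_le:
  assumes fin: "finite V" and gallai: "gallai_coloring V c" and P5: "mono_P5_free V c"
    and "b \<in> V" and n: "n1 \<in> mono_nbhd V c j b" "n2 \<in> mono_nbhd V c j b" "n1 \<noteq> n2"
  defines "C \<equiv> mono_component V c j b"
  shows "card (P3_colours C c) + card (V - C) \<le> card (P3_colours V c)"
proof -
  define f where "f x = c {x, b}" for x
  have outside: "c {x, z} = f x \<and> c {x, z} \<noteq> j" if "x \<in> V - C" "z \<in> C" for x z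
    using mono_component_outside_colour[OF gallai \<open>b \<in> V\<close>] that unfolding C_def f_def by blast
  have C: "b \<in> C" "n1 \<in> C" "n2 \<in> C" "C \<subseteq> V"
    using mono_component_self mono_component_step[OF mono_component_self] n
      mono_component_subset[OF \<open>b \<in> V\<close>, of c j] unfolding C_def by auto
  have into: "f x \<in> P3_colours V c" if x: "x \<in> V - C" for x
  proof -
    have "mono_path V c (f x) [n1, x, n2]"
      using outside[OF x \<open>n1 \<in> C\<close>] outside[OF x \<open>n2 \<in> C\<close>] x n C
      by (auto simp: mono_adj_def insert_commute)
    then show ?thesis
      by (rule P3_coloursI)
  qed
  have avoid: "f x \<notin> P3_colours C c" if x: "x \<in> V - C" for x
  proof
    assume "f x \<in> P3_colours C c"
    then obtain a m e where ame: "mono_path C c (f x) [a, m, e]"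
      unfolding P3_colours_iff by blast
    show False
    proof (cases "C \<subseteq> {a, m, e}")
      case True
      with C have "b \<in> {a, m, e}" "n1 \<in> {a, m, e}" "n2 \<in> {a, m, e}"
        by auto
      then show False
        using ame n outside[OF x \<open>b \<in> C\<close>] by (auto simp: mono_adj_def insert_commute)
    next
      case False
      then obtain w where "w \<in> C" "w \<notin> {a, m, e}"
        by blast
      then have "mono_path V c (f x) [w, x, a, m, e]"
        using ame x C outside[OF x] by (auto simp: insert_commute)
      then show False
        by (rule mono_P5_freeD[OF P5])
    qed
  qed
  have inj: "inj_on f (V - C)"
  proof
    fix x y assume x: "x \<in> V - C" and y: "y \<in> V - C" and "f x = f y"
    show "x = y"
    proof (rule ccontr)
      assume "x \<noteq> y"
      then have "mono_path V c (f x) [n1, x, b, y, n2]"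
        using x y C n outside[OF x] outside[OF y] \<open>f x = f y\<close>
        by (auto simp: mono_adj_def insert_commute)
      then show False
        by (rule mono_P5_freeD[OF P5])
    qed
  qed
  have "P3_colours C c \<inter> f ` (V - C) = {}"
    using avoid by blast
  then have "card (P3_colours C c) + card (V - C) = card (P3_colours C c \<union> f ` (V - C))"
    using finite_subset[OF \<open>C \<subseteq> V\<close> fin] fin
    by (simp add: card_Un_disjoint finite_P3_colours card_image[OF inj])
  also have "\<dots> \<le> card (P3_colours V c)"
    using into P3_colours_mono[OF \<open>C \<subseteq> V\<close>, of c]
    by (intro card_mono[OF finite_P3_colours[OF fin]]) auto
  finally show ?thesis .
qed

lemma card_le_card_P3_colours_step:
  assumes fin: "finite V" and gallai: "gallai_coloring V c" and P5: "mono_P5_free V c"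
    and "5 \<le> card V" and IH: "\<And>W. W \<subset> V \<Longrightarrow> card W \<le> card (P3_colours W c) + 3"
  shows "card V \<le> card (P3_colours V c) + 3"
proof -
  obtain j where j: "j \<in> P3_colours V c"
    using gallai_coloring_P3_colours_nonempty[OF gallai] \<open>5 \<le> card V\<close> by fastforce
  then obtain p q r where "mono_path V c j [p, q, r]"
    unfolding P3_colours_iff by blast
  then obtain b where "b \<in> V" and max: "\<forall>y\<in>V. card (mono_nbhd V c j y) \<le> card (mono_nbhd V c j b)"
    and "2 \<le> card (mono_nbhd V c j b)"
    by (rule obtain_max_degree_vertex[OF fin])
  from this(3) obtain n1 n2 where n: "n1 \<in> mono_nbhd V c j b" "n2 \<in> mono_nbhd V c j b" "n1 \<noteq> n2"
    by (rule card_ge_2_obtains)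
  define C where "C = mono_component V c j b"
  show ?thesis
  proof (cases "C = V")
    case True
    then have "card (P3_colours (V - {b}) c) < card (P3_colours V c)"
      using card_P3_colours_remove_max_degree_vertex[OF gallai P5 fin \<open>5 \<le> card V\<close> _ max j] C_def
      by blast
    moreover have "card (V - {b}) \<le> card (P3_colours (V - {b}) c) + 3"
      using IH \<open>b \<in> V\<close> by blast
    ultimately show ?thesis
      using \<open>b \<in> V\<close> fin by (simp add: card_Diff_singleton)
  next
    case False
    then have "C \<subset> V"
      using mono_component_subset[OF \<open>b \<in> V\<close>, of c j] unfolding C_def by blast
    moreover have "finite C"
      using \<open>C \<subset> V\<close> fin finite_subset by blast
    ultimately have "card V = card C + card (V - C)"
      using card_mono[OF fin, of C] by (simp add: card_Diff_subset)
    then show ?thesis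
      using IH[OF \<open>C \<subset> V\<close>] card_P3_colours_component_add_outside_le[OF fin gallai P5 \<open>b \<in> V\<close> n]
      unfolding C_def by linarith
  qed
qed

lemma card_le_card_P3_colours:
  assumes "finite V" "gallai_coloring V c" "mono_P5_free V c"
  shows "card V \<le> card (P3_colours V c) + 3"
  using assms
proof (induction "card V" arbitrary: V rule: less_induct)
  case less
  note fin = less.prems(1) and gallai = less.prems(2) and P5 = less.prems(3)
  have IH: "card W \<le> card (P3_colours W c) + 3" if "W \<subset> V" for W
    using less.hyps[of W] that fin gallai_coloring_subset[OF gallai] mono_P5_free_subset[OF P5]
    by (meson finite_subset psubset_card_mono psubset_imp_subset)
  consider "card V \<le> 3" | "card V = 4" | "5 \<le> card V"
    by linarith
  then show ?case
  proof cases
    case 2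
    then have "0 < card (P3_colours V c)"
      using gallai_coloring_P3_colours_nonempty[OF gallai] finite_P3_colours[OF fin]
      by (simp add: card_gt_0_iff)
    with 2 show ?thesis
      by simp
  next
    case 3
    then show ?thesis
      using card_le_card_P3_colours_step[OF fin gallai P5 _ IH] by blast
  qed simp
qed

lemma gallai_coloring_iff_no_rainbow_triangle:
  "gallai_coloring {..<n} c \<longleftrightarrow> \<not> has_rainbow_triangle n c"
  unfolding gallai_coloring_def has_rainbow_triangle_def by auto

lemma has_mono_path_iff:
  "has_mono_path n c m j \<longleftrightarrow> (\<exists>vs. length vs = m \<and> mono_path {..<n} c j vs)"
  unfolding has_mono_path_def mono_path_def by auto

lemma has_mono_path_shorter: "has_mono_path n c m j \<Longrightarrow> l \<le> m \<Longrightarrow> has_mono_path n c l j"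
  unfolding has_mono_path_iff by (metis length_take min.absorb2 mono_path_take)

lemma has_mono_P3_iff: "has_mono_path n c 3 j \<longleftrightarrow> j \<in> P3_colours {..<n} c"
  unfolding has_mono_path_iff P3_colours_iff
  by (fastforce simp: numeral_3_eq_3 length_Suc_conv simp del: mono_path_Cons_Cons)

lemma mono_P5_free_iff: "mono_P5_free {..<n} c \<longleftrightarrow> (\<forall>j. \<not> has_mono_path n c 5 j)"
  unfolding has_mono_path_iff mono_P5_free_def
  by (fastforce simp: numeral_eq_Suc length_Suc_conv simp del: mono_path_Cons_Cons)

lemma P3_colours_subset_colours: "edge_coloring n k c \<Longrightarrow> P3_colours {..<n} c \<subseteq> {1..k}"
  unfolding edge_coloring_def P3_colours_def by auto

theorem lemma1:
  fixes k t n :: nat and c :: "nat set \<Rightarrow> nat"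
  assumes "k \<ge> 2" and "t \<le> k" and "n \<ge> t + 4"
    and "edge_coloring n k c"
  shows "has_rainbow_triangle n c \<or>
         (\<exists>j\<in>{1..t}. has_mono_path n c 5 j) \<or>
         (\<exists>j\<in>{t+1..k}. has_mono_path n c 3 j)"
proof (rule ccontr)
  assume "\<not> ?thesis"
  then have gallai: "gallai_coloring {..<n} c"
    and no_P5: "\<forall>j\<in>{1..t}. \<not> has_mono_path n c 5 j"
    and no_P3: "\<forall>j\<in>{t+1..k}. \<not> has_mono_path n c 3 j"
    by (auto simp: gallai_coloring_iff_no_rainbow_triangle)
  have P3_colours: "P3_colours {..<n} c \<subseteq> {1..t}"
    using P3_colours_subset_colours[OF \<open>edge_coloring n k c\<close>] no_P3 by (force simp: has_mono_P3_iff)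
  have "mono_P5_free {..<n} c"
    using P3_colours no_P5 has_mono_path_shorter[of n c 5 _ 3]
    by (force simp: mono_P5_free_iff has_mono_P3_iff)
  then have "n \<le> card (P3_colours {..<n} c) + 3"
    using card_le_card_P3_colours[OF finite_lessThan gallai] by simp
  also have "\<dots> \<le> t + 3"
    using card_mono[OF finite_atLeastAtMost P3_colours] by simp
  finally show False
    using \<open>n \<ge> t + 4\<close> by simp
qed

end
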